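(* Let $F$ be a number field and $R$ an order in $F$. Let $G$ be a finite group, $H$ a finite subgroup of $\mathcal{V}(RG)$, and $x\in RG$. (i) The shifted bicyclic maps $\psi_{H,x}$ and $\psi_{x,H}$ are injective group morphisms $H\to\mathcal{U}(RG)$. (ii) The subgroups $H$, $\psi_{H,x}(H)$ and $\psi_{x,H}(H)$ are conjugate in $\mathcal{U}(FG)$. (iii) If moreover $H\le G$ and $g\in G$, then $\psi_{H,g}$ and $\psi_{g^{-1},H}$ restrict to the identity on $H\cap H^g$, and $\psi_{H,g}(H)\cap\psi_{g^{-1},H}(H)=H\cap H^g$.
   Context: $\mathcal{V}(RG)$ is the group of units of $RG$ of augmentation $1$. For a finite subgroup $H$ put $\widetilde{H}=\sum_{h\in H}h$. The shifted bicyclic maps are $\psi_{H,x}:H\to\mathcal{U}(RG)$, $h\mapsto h+\widetilde{H}x(1-h)$, and $\psi_{x,H}:H\to\mathcal{U}(RG)$, $h\mapsto h+(1-h)x\widetilde{H}$. $H^g=g^{-1}Hg$. *)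

theory Defs
  imports Complex_Main "HOL-Algebra.Algebra"
begin

definition number_field :: "'f::field_char_0 itself \<Rightarrow> bool" where
  "number_field _ \<longleftrightarrow>
     (\<exists>B::'f set. finite B \<and> (\<forall>x::'f. \<exists>c. x = (\<Sum>b\<in>B. of_rat (c b) * b)))"

definition is_order :: "'f::field_char_0 set \<Rightarrow> bool" where
  "is_order R \<longleftrightarrow>
     0 \<in> R \<and> 1 \<in> R \<and>
     (\<forall>a\<in>R. \<forall>b\<in>R. a + b \<in> R \<and> a * b \<in> R \<and> - a \<in> R) \<and>
     (\<exists>B. finite B \<and> B \<subseteq> R \<and> R = {\<Sum>b\<in>B. of_int (c b) * b | c. True}) \<and>
     (\<exists>B. finite B \<and> B \<subseteq> R \<and> (\<forall>x::'f. \<exists>c. x = (\<Sum>b\<in>B. of_rat (c b) * b)))"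

text \<open>Elements of the group ring AG of a finite group G (HOL-Algebra) with coefficients
in a set A of a commutative ring are functions G -> A, extended by 0 outside G.\<close>

definition gr_carrier :: "('g,'b) monoid_scheme \<Rightarrow> 'f::comm_ring_1 set \<Rightarrow> ('g \<Rightarrow> 'f) set" where
  "gr_carrier G A = {a. (\<forall>g\<in>carrier G. a g \<in> A) \<and> (\<forall>g. g \<notin> carrier G \<longrightarrow> a g = 0)}"

definition gr_mult :: "('g,'b) monoid_scheme \<Rightarrow> ('g \<Rightarrow> 'f::comm_ring_1) \<Rightarrow> ('g \<Rightarrow> 'f) \<Rightarrow> ('g \<Rightarrow> 'f)" where
  "gr_mult G a b = (\<lambda>k. if k \<in> carrier G
      then (\<Sum>h\<in>carrier G. a h * b (inv\<^bsub>G\<^esub> h \<otimes>\<^bsub>G\<^esub> k)) else 0)"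

definition gr_one :: "('g,'b) monoid_scheme \<Rightarrow> ('g \<Rightarrow> 'f::comm_ring_1)" where
  "gr_one G = (\<lambda>k. if k = \<one>\<^bsub>G\<^esub> then 1 else 0)"

definition gr_add :: "('g \<Rightarrow> 'f::comm_ring_1) \<Rightarrow> ('g \<Rightarrow> 'f) \<Rightarrow> ('g \<Rightarrow> 'f)" where
  "gr_add a b = (\<lambda>k. a k + b k)"

definition gr_diff :: "('g \<Rightarrow> 'f::comm_ring_1) \<Rightarrow> ('g \<Rightarrow> 'f) \<Rightarrow> ('g \<Rightarrow> 'f)" where
  "gr_diff a b = (\<lambda>k. a k - b k)"

definition group_ring :: "('g,'b) monoid_scheme \<Rightarrow> 'f::comm_ring_1 set \<Rightarrow> ('g \<Rightarrow> 'f) ring" where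
  "group_ring G A = \<lparr>carrier = gr_carrier G A, Group.monoid.mult = gr_mult G, Group.monoid.one = gr_one G,
                     Ring.ring.zero = (\<lambda>_. 0), Ring.ring.add = gr_add\<rparr>"

definition gr_of :: "('g,'b) monoid_scheme \<Rightarrow> 'g \<Rightarrow> ('g \<Rightarrow> 'f::comm_ring_1)" where
  "gr_of G g = (\<lambda>k. if k = g then 1 else 0)"

definition augmentation :: "('g,'b) monoid_scheme \<Rightarrow> ('g \<Rightarrow> 'f::comm_ring_1) \<Rightarrow> 'f" where
  "augmentation G a = (\<Sum>g\<in>carrier G. a g)"

definition gr_V :: "('g,'b) monoid_scheme \<Rightarrow> 'f::comm_ring_1 set \<Rightarrow> ('g \<Rightarrow> 'f) set" where
  "gr_V G A = {u \<in> Units (group_ring G A). augmentation G u = 1}"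

definition tilde :: "('g \<Rightarrow> 'f::comm_ring_1) set \<Rightarrow> ('g \<Rightarrow> 'f)" where
  "tilde H = (\<lambda>k. \<Sum>h\<in>H. h k)"

definition psi_left :: "('g,'b) monoid_scheme \<Rightarrow> ('g \<Rightarrow> 'f::comm_ring_1) set \<Rightarrow> ('g \<Rightarrow> 'f)
    \<Rightarrow> ('g \<Rightarrow> 'f) \<Rightarrow> ('g \<Rightarrow> 'f)" where
  "psi_left G H x h = gr_add h (gr_mult G (gr_mult G (tilde H) x) (gr_diff (gr_one G) h))"

definition psi_right :: "('g,'b) monoid_scheme \<Rightarrow> ('g \<Rightarrow> 'f::comm_ring_1) \<Rightarrow> ('g \<Rightarrow> 'f) set
    \<Rightarrow> ('g \<Rightarrow> 'f) \<Rightarrow> ('g \<Rightarrow> 'f)" where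
  "psi_right G x H h = gr_add h (gr_mult G (gr_mult G (gr_diff (gr_one G) h) x) (tilde H))"

end

theory Submission
  imports Defs "HOL-Library.Function_Algebras"
begin

(* Write ^H = |H|^-1 H~, which makes sense in characteristic 0. For h in H one has
   h ^H = ^H h = ^H, so ^H is an idempotent of FG. Put a = H~ x (1 - ^H). Since (1 - ^H) H~ = 0 we get
   a^2 = 0, so 1 + a is a unit of FG with inverse 1 - a; and since h a = a for h in H,
     (1 - a) h (1 + a) = h + a - a h = h + H~ x (1 - h) = psi_{H,x}(h).
   Thus psi_{H,x} is the restriction to H of conjugation by a unit of FG, which gives (i) and (ii);
   its values lie in RG by the defining formula. The map psi_{x,H} is handled symmetrically with
   a = (1 - ^H) x H~.

   For (iii) let H = K be a subgroup of G. The coefficient of psi_{K,g}(b) at k is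
   [k = b] + [k in Kg] - [k in Kgb], and dually for psi_{g^-1,K}. Hence b in K is fixed by both maps
   when g b g^-1 lies in K, while otherwise the coefficients at gb and at g show that psi_{K,g}(b)
   is not a value of psi_{g^-1,K}. *)

section \<open>The group ring of a finite group\<close>

definition ring_closed :: "'f::comm_ring_1 set \<Rightarrow> bool" where
  "ring_closed A \<longleftrightarrow> 0 \<in> A \<and> 1 \<in> A \<and> (\<forall>a\<in>A. \<forall>b\<in>A. a + b \<in> A \<and> a * b \<in> A \<and> - a \<in> A)"

lemma ring_closed_UNIV: "ring_closed UNIV"
  by (simp add: ring_closed_def)

lemma is_order_imp_ring_closed: "is_order R \<Longrightarrow> ring_closed R"
  by (simp add: is_order_def ring_closed_def)

lemma ring_closed_diff: "ring_closed A \<Longrightarrow> a \<in> A \<Longrightarrow> b \<in> A \<Longrightarrow> a - b \<in> A"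
  unfolding ring_closed_def by (metis diff_conv_add_uminus)

lemma ring_closed_sum: "ring_closed A \<Longrightarrow> (\<And>j. j \<in> S \<Longrightarrow> f j \<in> A) \<Longrightarrow> sum f S \<in> A"
  by (induction S rule: infinite_finite_induct) (auto simp: ring_closed_def)

lemma sum_fun_apply: "(\<Sum>j\<in>S. f j) x = (\<Sum>j\<in>S. f j x)"
  by (induction S rule: infinite_finite_induct) auto

lemma gr_add_eq_plus [simp]: "gr_add a b = a + b"
  by (simp add: gr_add_def plus_fun_def)

lemma gr_diff_eq_minus [simp]: "gr_diff a b = a - b"
  by (simp add: gr_diff_def fun_diff_def)

lemma tilde_eq_sum: "tilde H = (\<Sum>h\<in>H. h)"
  by (simp add: tilde_def sum_fun_apply fun_eq_iff)

lemma gr_of_apply: "gr_of G a k = of_bool (k = a)"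
  by (simp add: gr_of_def)

lemma gr_of_inj: "inj (gr_of G)"
  by (rule injI) (metis gr_of_def one_neq_zero)

locale finite_group = group +
  assumes finite_carrier: "finite (carrier G)"
begin

abbreviation gr_times :: "('a \<Rightarrow> 'f::comm_ring_1) \<Rightarrow> ('a \<Rightarrow> 'f) \<Rightarrow> ('a \<Rightarrow> 'f)" (infixl "\<star>" 70)
  where "a \<star> b \<equiv> gr_mult G a b"

lemma gr_mult_assoc: "(a \<star> b) \<star> c = a \<star> (b \<star> c)"
proof (rule ext)
  fix k
  show "((a \<star> b) \<star> c) k = (a \<star> (b \<star> c)) k"
  proof (cases "k \<in> carrier G")
    case False then show ?thesis by (simp add: gr_mult_def)
  next
    case k: True
    have "((a \<star> b) \<star> c) k
        = (\<Sum>j\<in>carrier G. a j * (\<Sum>h\<in>carrier G. b (inv j \<otimes> h) * c (inv h \<otimes> k)))"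
      using k by (simp add: gr_mult_def sum_distrib_left sum_distrib_right mult.assoc)
        (rule sum.swap)
    also have "\<dots> = (\<Sum>j\<in>carrier G. a j * (\<Sum>l\<in>carrier G. b l * c (inv l \<otimes> (inv j \<otimes> k))))"
    proof (rule sum.cong[OF refl])
      fix j assume j: "j \<in> carrier G"
      have "bij_betw (\<lambda>l. j \<otimes> l) (carrier G) (carrier G)"
        using j by (intro bij_betwI[where g = "\<lambda>l. inv j \<otimes> l"]) (auto simp flip: m_assoc)
      then have "(\<Sum>h\<in>carrier G. b (inv j \<otimes> h) * c (inv h \<otimes> k))
          = (\<Sum>l\<in>carrier G. b (inv j \<otimes> (j \<otimes> l)) * c (inv (j \<otimes> l) \<otimes> k))"
        by (rule sum.reindex_bij_betw[symmetric])
      also have "\<dots> = (\<Sum>l\<in>carrier G. b l * c (inv l \<otimes> (inv j \<otimes> k)))"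
        using j k by (intro sum.cong refl) (simp add: inv_mult_group m_assoc flip: m_assoc)
      finally show "a j * (\<Sum>h\<in>carrier G. b (inv j \<otimes> h) * c (inv h \<otimes> k))
          = a j * (\<Sum>l\<in>carrier G. b l * c (inv l \<otimes> (inv j \<otimes> k)))" by simp
    qed
    also have "\<dots> = (a \<star> (b \<star> c)) k"
      using k by (simp add: gr_mult_def)
    finally show ?thesis .
  qed
qed

lemma gr_mult_in_UNIV [simp]: "a \<star> b \<in> gr_carrier G UNIV"
  by (simp add: gr_carrier_def gr_mult_def)

lemma gr_carrier_eqI:
  assumes "a \<in> gr_carrier G UNIV" "b \<in> gr_carrier G UNIV" "\<And>k. k \<in> carrier G \<Longrightarrow> a k = b k"
  shows "a = b"
proof
  fix k
  show "a k = b k"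
    using assms by (cases "k \<in> carrier G") (auto simp: gr_carrier_def)
qed

lemma gr_mult_closed:
  "ring_closed A \<Longrightarrow> a \<in> gr_carrier G A \<Longrightarrow> b \<in> gr_carrier G A \<Longrightarrow> a \<star> b \<in> gr_carrier G A"
  unfolding gr_carrier_def gr_mult_def
  by (auto intro!: ring_closed_sum) (auto simp: ring_closed_def)

lemma gr_add_closed:
  "ring_closed A \<Longrightarrow> a \<in> gr_carrier G A \<Longrightarrow> b \<in> gr_carrier G A \<Longrightarrow> a + b \<in> gr_carrier G A"
  unfolding gr_carrier_def ring_closed_def by auto

lemma gr_diff_closed:
  "ring_closed A \<Longrightarrow> a \<in> gr_carrier G A \<Longrightarrow> b \<in> gr_carrier G A \<Longrightarrow> a - b \<in> gr_carrier G A"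
  unfolding gr_carrier_def by (auto simp: ring_closed_diff)

lemma gr_of_closed: "ring_closed A \<Longrightarrow> a \<in> carrier G \<Longrightarrow> gr_of G a \<in> gr_carrier G A"
  unfolding gr_carrier_def gr_of_def ring_closed_def by auto

lemma gr_one_eq_gr_of: "gr_one G = gr_of G \<one>"
  by (simp add: gr_one_def gr_of_def)

lemma gr_one_closed: "ring_closed A \<Longrightarrow> gr_one G \<in> gr_carrier G A"
  by (simp add: gr_one_eq_gr_of gr_of_closed)

lemma tilde_closed: "ring_closed A \<Longrightarrow> H \<subseteq> gr_carrier G A \<Longrightarrow> tilde H \<in> gr_carrier G A"
  unfolding tilde_def gr_carrier_def by (auto intro!: ring_closed_sum sum.neutral)

lemmas gr_carrier_UNIV_closed [simp] =
  gr_add_closed[OF ring_closed_UNIV] gr_diff_closed[OF ring_closed_UNIV]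
  gr_of_closed[OF ring_closed_UNIV] gr_one_closed[OF ring_closed_UNIV]

lemma gr_mult_add_left: "(a + b) \<star> c = a \<star> c + b \<star> c"
  by (auto simp add: gr_mult_def fun_eq_iff algebra_simps sum.distrib)

lemma gr_mult_add_right: "c \<star> (a + b) = c \<star> a + c \<star> b"
  by (auto simp add: gr_mult_def fun_eq_iff algebra_simps sum.distrib)

lemma gr_mult_diff_left: "(a - b) \<star> c = a \<star> c - b \<star> c"
  by (auto simp add: gr_mult_def fun_eq_iff algebra_simps sum_subtractf)

lemma gr_mult_diff_right: "c \<star> (a - b) = c \<star> a - c \<star> b"
  by (auto simp add: gr_mult_def fun_eq_iff algebra_simps sum_subtractf)

lemma gr_mult_zero_left [simp]: "0 \<star> a = 0"
  by (simp add: gr_mult_def fun_eq_iff)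

lemma gr_mult_zero_right [simp]: "a \<star> 0 = 0"
  by (simp add: gr_mult_def fun_eq_iff)

lemma gr_mult_scale_left: "(\<lambda>k. c * a k) \<star> b = (\<lambda>k. c * (a \<star> b) k)"
  by (simp add: gr_mult_def fun_eq_iff sum_distrib_left mult.assoc)

lemma gr_mult_scale_right: "b \<star> (\<lambda>k. c * a k) = (\<lambda>k. c * (b \<star> a) k)"
  by (simp add: gr_mult_def fun_eq_iff sum_distrib_left algebra_simps)

lemma gr_mult_sum_left: "(\<Sum>j\<in>S. f j) \<star> b = (\<Sum>j\<in>S. f j \<star> b)"
  unfolding gr_mult_def by (auto simp: fun_eq_iff sum_fun_apply sum_distrib_right intro: sum.swap)

lemma gr_mult_sum_right: "b \<star> (\<Sum>j\<in>S. f j) = (\<Sum>j\<in>S. b \<star> f j)"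
  unfolding gr_mult_def by (auto simp: fun_eq_iff sum_fun_apply sum_distrib_left intro: sum.swap)

lemma gr_mult_gr_of_left:
  assumes a: "a \<in> carrier G"
  shows "gr_of G a \<star> f = (\<lambda>k. if k \<in> carrier G then f (inv a \<otimes> k) else 0)"
proof -
  have "(\<Sum>h\<in>carrier G. gr_of G a h * f (inv h \<otimes> k))
      = (\<Sum>h\<in>carrier G. if h = a then f (inv a \<otimes> k) else 0)" for k
    by (rule sum.cong) (auto simp: gr_of_def)
  then show ?thesis
    using a finite_carrier by (simp add: gr_mult_def fun_eq_iff)
qed

lemma gr_mult_gr_of_right:
  assumes b: "b \<in> carrier G"
  shows "f \<star> gr_of G b = (\<lambda>k. if k \<in> carrier G then f (k \<otimes> inv b) else 0)"
proof -
  have "(\<Sum>h\<in>carrier G. f h * gr_of G b (inv h \<otimes> k))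
      = (\<Sum>h\<in>carrier G. if h = k \<otimes> inv b then f (k \<otimes> inv b) else 0)" if k: "k \<in> carrier G" for k
  proof (rule sum.cong)
    fix h assume h: "h \<in> carrier G"
    then have "inv h \<otimes> k = b \<longleftrightarrow> h = k \<otimes> inv b"
      using b k by (metis inv_solve_left inv_solve_right)
    then show "f h * gr_of G b (inv h \<otimes> k) = (if h = k \<otimes> inv b then f (k \<otimes> inv b) else 0)"
      by (auto simp: gr_of_def)
  qed simp
  then show ?thesis
    using b finite_carrier by (simp add: gr_mult_def fun_eq_iff)
qed

lemma gr_mult_one_left: "a \<in> gr_carrier G UNIV \<Longrightarrow> gr_one G \<star> a = a"
  by (auto simp add: gr_one_eq_gr_of gr_mult_gr_of_left fun_eq_iff gr_carrier_def)

lemma gr_mult_one_right: "a \<in> gr_carrier G UNIV \<Longrightarrow> a \<star> gr_one G = a"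
  by (auto simp add: gr_one_eq_gr_of gr_mult_gr_of_right fun_eq_iff gr_carrier_def)

lemma gr_of_mult:
  assumes a: "a \<in> carrier G" and b: "b \<in> carrier G"
  shows "gr_of G a \<star> gr_of G b = gr_of G (a \<otimes> b)"
proof -
  have "inv a \<otimes> k = b \<longleftrightarrow> k = a \<otimes> b" if "k \<in> carrier G" for k
    using a b that by (metis inv_solve_left)
  then show ?thesis
    unfolding gr_mult_gr_of_left[OF a] using a b by (auto simp: fun_eq_iff gr_of_def)
qed

lemma gr_carrier_subset_UNIV: "gr_carrier G A \<subseteq> gr_carrier G UNIV"
  by (auto simp: gr_carrier_def)

lemma monoid_group_ring: "ring_closed A \<Longrightarrow> monoid (group_ring G A)"
  using gr_carrier_subset_UNIV[of A]
  by (intro monoidI) (auto simp: group_ring_def gr_mult_closed gr_one_closed gr_mult_assoc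
      intro!: gr_mult_one_left gr_mult_one_right)

lemma square_zero_unit:
  assumes "a \<in> gr_carrier G UNIV" "a \<star> a = 0"
  shows "(gr_one G + a) \<star> (gr_one G - a) = gr_one G" "(gr_one G - a) \<star> (gr_one G + a) = gr_one G"
  using assms by (simp_all add: gr_mult_add_left gr_mult_add_right gr_mult_diff_left gr_mult_diff_right
      gr_mult_one_left gr_mult_one_right)

end

section \<open>Shifted bicyclic maps at elements of a subgroup of G\<close>

lemma (in group) subgroup_mult_right_mem_iff:
  assumes K: "subgroup K G" and d: "d \<in> K" and x: "x \<in> carrier G"
  shows "x \<otimes> d \<in> K \<longleftrightarrow> x \<in> K"
proof
  assume "x \<otimes> d \<in> K"
  then have "x \<otimes> d \<otimes> inv d \<in> K"
    using subgroup.m_closed[OF K _ subgroup.m_inv_closed[OF K d]] by blast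
  then show "x \<in> K"
    using x subgroup.mem_carrier[OF K d] by (simp add: m_assoc)
qed (use subgroup.m_closed[OF K] d in blast)

lemma (in group) subgroup_mult_left_mem_iff:
  assumes K: "subgroup K G" and d: "d \<in> K" and x: "x \<in> carrier G"
  shows "d \<otimes> x \<in> K \<longleftrightarrow> x \<in> K"
proof
  assume "d \<otimes> x \<in> K"
  then have "inv d \<otimes> (d \<otimes> x) \<in> K"
    using subgroup.m_closed[OF K subgroup.m_inv_closed[OF K d]] by blast
  then show "x \<in> K"
    using x subgroup.mem_carrier[OF K d] by (simp flip: m_assoc)
qed (use subgroup.m_closed[OF K] d in blast)

lemma (in group) subgroup_inv_mem_iff:
  assumes K: "subgroup K G" and x: "x \<in> carrier G"
  shows "inv x \<in> K \<longleftrightarrow> x \<in> K"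
  using subgroup.m_inv_closed[OF K, of "inv x"] subgroup.m_inv_closed[OF K, of x] x by auto

lemma (in group) inter_conj_image:
  assumes KG: "K \<subseteq> carrier G" and g: "g \<in> carrier G"
  shows "K \<inter> (\<lambda>a. inv g \<otimes> a \<otimes> g) ` K = {b \<in> K. g \<otimes> b \<otimes> inv g \<in> K}"
proof (intro equalityI subsetI)
  fix b assume "b \<in> K \<inter> (\<lambda>a. inv g \<otimes> a \<otimes> g) ` K"
  then obtain a where "b \<in> K" and a: "a \<in> K" and "b = inv g \<otimes> a \<otimes> g"
    by blast
  moreover have "g \<otimes> (inv g \<otimes> a \<otimes> g) \<otimes> inv g = a"
    using g a KG by (simp add: subsetD m_assoc) (simp add: subsetD flip: m_assoc)
  ultimately show "b \<in> {b \<in> K. g \<otimes> b \<otimes> inv g \<in> K}"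
    by simp
next
  fix b assume b: "b \<in> {b \<in> K. g \<otimes> b \<otimes> inv g \<in> K}"
  then have "b = inv g \<otimes> (g \<otimes> b \<otimes> inv g) \<otimes> g"
    using g KG by (simp add: subsetD m_assoc) (simp add: subsetD flip: m_assoc)
  then show "b \<in> K \<inter> (\<lambda>a. inv g \<otimes> a \<otimes> g) ` K"
    using b by blast
qed

context finite_group
begin

lemma tilde_gr_of_image:
  assumes K: "K \<subseteq> carrier G"
  shows "tilde (gr_of G ` K) = (\<lambda>k. of_bool (k \<in> K))"
proof
  fix k
  have "finite K"
    using K finite_carrier finite_subset by blast
  then have "(\<Sum>a\<in>K. gr_of G a k) = of_bool (k \<in> K)"
    by (simp add: gr_of_def)
  then show "tilde (gr_of G ` K) k = of_bool (k \<in> K)"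
    by (simp add: tilde_def sum.reindex inj_on_subset[OF gr_of_inj])
qed

lemma psi_left_gr_of_apply:
  assumes K: "K \<subseteq> carrier G" and g: "g \<in> carrier G" and b: "b \<in> carrier G" and k: "k \<in> carrier G"
  shows "psi_left G (gr_of G ` K) (gr_of G g) (gr_of G b) k
    = of_bool (k = b) + of_bool (k \<otimes> inv g \<in> K) - of_bool (k \<otimes> inv b \<otimes> inv g \<in> K)"
proof -
  have eq: "psi_left G (gr_of G ` K) (gr_of G g) (gr_of G b)
      = gr_of G b + tilde (gr_of G ` K) \<star> gr_of G g - tilde (gr_of G ` K) \<star> gr_of G (g \<otimes> b)"
    using g b by (simp add: psi_left_def gr_mult_diff_right gr_mult_one_right gr_mult_assoc gr_of_mult)
  show ?thesis
    unfolding eq using g b k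
    by (simp add: gr_mult_gr_of_right tilde_gr_of_image[OF K] inv_mult_group m_assoc)
      (simp add: gr_of_apply)
qed

lemma psi_right_gr_of_apply:
  assumes K: "K \<subseteq> carrier G" and g: "g \<in> carrier G" and b: "b \<in> carrier G" and k: "k \<in> carrier G"
  shows "psi_right G (gr_of G (inv g)) (gr_of G ` K) (gr_of G b) k
    = of_bool (k = b) + of_bool (g \<otimes> k \<in> K) - of_bool (g \<otimes> inv b \<otimes> k \<in> K)"
proof -
  have eq: "psi_right G (gr_of G (inv g)) (gr_of G ` K) (gr_of G b)
      = gr_of G b + gr_of G (inv g) \<star> tilde (gr_of G ` K) - gr_of G (b \<otimes> inv g) \<star> tilde (gr_of G ` K)"
    using g b by (simp add: psi_right_def gr_mult_diff_left gr_mult_one_left gr_of_mult)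
  show ?thesis
    unfolding eq using g b k
    by (simp add: gr_mult_gr_of_left tilde_gr_of_image[OF K] inv_mult_group m_assoc)
      (simp add: gr_of_apply)
qed

lemma psi_left_gr_of_fixed:
  assumes K: "subgroup K G" and g: "g \<in> carrier G" and b: "b \<in> carrier G"
    and conj: "g \<otimes> b \<otimes> inv g \<in> K"
  shows "psi_left G (gr_of G ` K) (gr_of G g) (gr_of G b) = gr_of G b"
proof (rule gr_carrier_eqI)
  show "psi_left G (gr_of G ` K) (gr_of G g) (gr_of G b) \<in> gr_carrier G UNIV"
    using b by (simp add: psi_left_def)
  show "gr_of G b \<in> gr_carrier G UNIV"
    using b by simp
  fix k assume k: "k \<in> carrier G"
  have "k \<otimes> inv b \<otimes> inv g = k \<otimes> inv g \<otimes> inv (g \<otimes> b \<otimes> inv g)"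
    using g b k by (simp add: inv_mult_group m_assoc) (simp flip: m_assoc)
  then have "k \<otimes> inv b \<otimes> inv g \<in> K \<longleftrightarrow> k \<otimes> inv g \<in> K"
    using g k subgroup_mult_right_mem_iff[OF K subgroup.m_inv_closed[OF K conj]] by simp
  then show "psi_left G (gr_of G ` K) (gr_of G g) (gr_of G b) k = gr_of G b k"
    using psi_left_gr_of_apply[OF subgroup.subset[OF K] g b k] by (simp add: gr_of_apply)
qed

lemma psi_right_gr_of_fixed:
  assumes K: "subgroup K G" and g: "g \<in> carrier G" and b: "b \<in> carrier G"
    and conj: "g \<otimes> b \<otimes> inv g \<in> K"
  shows "psi_right G (gr_of G (inv g)) (gr_of G ` K) (gr_of G b) = gr_of G b"
proof (rule gr_carrier_eqI)
  show "psi_right G (gr_of G (inv g)) (gr_of G ` K) (gr_of G b) \<in> gr_carrier G UNIV"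
    using b by (simp add: psi_right_def)
  show "gr_of G b \<in> gr_carrier G UNIV"
    using b by simp
  fix k assume k: "k \<in> carrier G"
  have "g \<otimes> inv b \<otimes> k = inv (g \<otimes> b \<otimes> inv g) \<otimes> (g \<otimes> k)"
    using g b k by (simp add: inv_mult_group m_assoc) (simp flip: m_assoc)
  then have "g \<otimes> inv b \<otimes> k \<in> K \<longleftrightarrow> g \<otimes> k \<in> K"
    using g k subgroup_mult_left_mem_iff[OF K subgroup.m_inv_closed[OF K conj]] by simp
  then show "psi_right G (gr_of G (inv g)) (gr_of G ` K) (gr_of G b) k = gr_of G b k"
    using psi_right_gr_of_apply[OF subgroup.subset[OF K] g b k] by (simp add: gr_of_apply)
qed

lemma psi_left_neq_psi_right:
  assumes K: "subgroup K G" and g: "g \<in> carrier G" and b: "b \<in> K" and c: "c \<in> K"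
    and conj: "g \<otimes> b \<otimes> inv g \<notin> K"
  shows "psi_left G (gr_of G ` K) (gr_of G g) (gr_of G b)
    \<noteq> (psi_right G (gr_of G (inv g)) (gr_of G ` K) (gr_of G c) :: 'a \<Rightarrow> 'f::{comm_ring_1, ring_char_0})"
proof
  let ?p = "psi_left G (gr_of G ` K) (gr_of G g) (gr_of G b) :: 'a \<Rightarrow> 'f"
  let ?q = "psi_right G (gr_of G (inv g)) (gr_of G ` K) (gr_of G c) :: 'a \<Rightarrow> 'f"
  assume eq: "?p = ?q"
  have KG: "K \<subseteq> carrier G"
    using subgroup.subset[OF K] .
  have bG: "b \<in> carrier G" and cG: "c \<in> carrier G"
    using b c KG by auto
  have gK: "g \<notin> K"
  proof
    assume "g \<in> K"
    then have "g \<otimes> b \<otimes> inv g \<in> K"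
      using b by (intro subgroup.m_closed[OF K] subgroup.m_inv_closed[OF K])
    with conj show False ..
  qed
  have one: "\<one> \<in> K"
    using subgroup.one_closed[OF K] .
  have "g \<otimes> b \<noteq> b"
    using g bG gK one by auto
  then have "?p (g \<otimes> b) = - 1"
    using g bG conj one by (simp add: psi_left_gr_of_apply[OF KG] m_assoc)
  then have "?q (g \<otimes> b) = - 1"
    by (simp add: eq)
  then have "g \<otimes> (g \<otimes> b) \<notin> K"
    using g bG cG by (auto simp: psi_right_gr_of_apply[OF KG] of_bool_def split: if_splits)
  then have gg: "g \<otimes> g \<notin> K"
    using g bG subgroup_mult_right_mem_iff[OF K b, of "g \<otimes> g"] by (simp add: m_assoc)
  have "inv (g \<otimes> b \<otimes> inv g) = g \<otimes> inv b \<otimes> inv g"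
    using g bG by (simp add: inv_mult_group m_assoc)
  then have "g \<otimes> inv b \<otimes> inv g \<notin> K"
    using conj g bG subgroup_inv_mem_iff[OF K, of "g \<otimes> b \<otimes> inv g"] by simp
  then have "?p g = 1"
    using g bG gK b one by (auto simp: psi_left_gr_of_apply[OF KG] m_assoc)
  moreover have "?q g \<noteq> 1"
    using g cG gK c gg by (auto simp: psi_right_gr_of_apply[OF KG] of_bool_def)
  ultimately show False
    by (simp add: eq)
qed

lemma psi_gr_of_images_inter:
  assumes K: "subgroup K G" and g: "g \<in> carrier G"
  shows "psi_left G (gr_of G ` K) (gr_of G g) ` gr_of G ` K
      \<inter> psi_right G (gr_of G (inv g)) (gr_of G ` K) ` gr_of G ` K
    = (gr_of G ` {b \<in> K. g \<otimes> b \<otimes> inv g \<in> K} :: ('a \<Rightarrow> 'f::{comm_ring_1, ring_char_0}) set)"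
    (is "?P \<inter> ?Q = ?F")
proof
  have KG: "K \<subseteq> carrier G"
    using subgroup.subset[OF K] .
  show "?F \<subseteq> ?P \<inter> ?Q"
  proof
    fix h assume "h \<in> ?F"
    then obtain b where b: "b \<in> K" "g \<otimes> b \<otimes> inv g \<in> K" and h: "h = gr_of G b"
      by blast
    have bG: "b \<in> carrier G"
      using b KG by blast
    have "psi_left G (gr_of G ` K) (gr_of G g) h = h"
      "psi_right G (gr_of G (inv g)) (gr_of G ` K) h = h"
      unfolding h by (rule psi_left_gr_of_fixed[OF K g bG b(2)] psi_right_gr_of_fixed[OF K g bG b(2)])+
    then show "h \<in> ?P \<inter> ?Q"
      using b h by (metis IntI imageI)
  qed
  show "?P \<inter> ?Q \<subseteq> ?F"
  proof
    fix f assume "f \<in> ?P \<inter> ?Q"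
    then obtain b c where b: "b \<in> K" and c: "c \<in> K"
      and fb: "f = psi_left G (gr_of G ` K) (gr_of G g) (gr_of G b)"
      and fc: "f = psi_right G (gr_of G (inv g)) (gr_of G ` K) (gr_of G c)"
      by blast
    then have "g \<otimes> b \<otimes> inv g \<in> K"
      using psi_left_neq_psi_right[OF K g b c] by blast
    moreover have "b \<in> carrier G"
      using b KG by blast
    ultimately show "f \<in> ?F"
      using b fb psi_left_gr_of_fixed[OF K g] by auto
  qed
qed

lemma gr_of_conj_image_inter:
  assumes K: "subgroup K G" and g: "g \<in> carrier G"
  shows "gr_of G ` K \<inter> (\<lambda>h. gr_of G (inv g) \<star> h \<star> gr_of G g) ` gr_of G ` K
    = (gr_of G ` {b \<in> K. g \<otimes> b \<otimes> inv g \<in> K} :: ('a \<Rightarrow> 'f::comm_ring_1) set)"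
proof -
  have KG: "K \<subseteq> carrier G"
    using subgroup.subset[OF K] .
  have "(\<lambda>h. gr_of G (inv g) \<star> h \<star> gr_of G g) ` gr_of G ` K
      = (gr_of G ` (\<lambda>a. inv g \<otimes> a \<otimes> g) ` K :: ('a \<Rightarrow> 'f) set)"
    unfolding image_image using g KG by (intro image_cong) (auto simp: gr_of_mult)
  moreover have "K \<inter> (\<lambda>a. inv g \<otimes> a \<otimes> g) ` K = {b \<in> K. g \<otimes> b \<otimes> inv g \<in> K}"
    using KG g by (rule inter_conj_image)
  ultimately show ?thesis
    by (simp add: image_Int[OF gr_of_inj, symmetric])
qed

end

section \<open>Finite subgroups of units of the group ring\<close>

locale finite_unit_subgroup = finite_group +
  fixes A :: "'f::field_char_0 set" and H :: "('a \<Rightarrow> 'f) set"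
  assumes ring_closed: "ring_closed A"
    and subgroup_units: "subgroup H (units_of (group_ring G A))"
    and finite_H: "finite H"
begin

lemma mem_gr_carrier: "h \<in> H \<Longrightarrow> h \<in> gr_carrier G A"
  using subgroup.subset[OF subgroup_units] monoid.Units_closed[OF monoid_group_ring[OF ring_closed]]
  by (auto simp: units_of_carrier group_ring_def)

lemma mem_gr_carrier_UNIV [simp]: "h \<in> H \<Longrightarrow> h \<in> gr_carrier G UNIV"
  using mem_gr_carrier gr_carrier_subset_UNIV by blast

lemma mult_mem: "h \<in> H \<Longrightarrow> k \<in> H \<Longrightarrow> h \<star> k \<in> H"
  using subgroup.m_closed[OF subgroup_units] by (auto simp: units_of_mult group_ring_def)

lemma one_mem: "gr_one G \<in> H"
  using subgroup.one_closed[OF subgroup_units] by (auto simp: units_of_one group_ring_def)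

lemma inverse_mem:
  assumes h: "h \<in> H"
  obtains h' where "h' \<in> H" "h \<star> h' = gr_one G" "h' \<star> h = gr_one G"
proof
  let ?U = "units_of (group_ring G A)"
  have U: "group ?U"
    by (rule monoid.units_group[OF monoid_group_ring[OF ring_closed]])
  have hU: "h \<in> carrier ?U"
    using h subgroup.subset[OF subgroup_units] by auto
  show "inv\<^bsub>?U\<^esub> h \<in> H"
    using subgroup.m_inv_closed[OF subgroup_units h] .
  show "h \<star> inv\<^bsub>?U\<^esub> h = gr_one G" "inv\<^bsub>?U\<^esub> h \<star> h = gr_one G"
    using group.r_inv[OF U hU] group.l_inv[OF U hU]
    by (simp_all add: units_of_mult units_of_one group_ring_def)
qed

lemma tilde_H_closed: "tilde H \<in> gr_carrier G A"
  using tilde_closed[OF ring_closed] mem_gr_carrier by blast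

lemma tilde_H_in_UNIV [simp]: "tilde H \<in> gr_carrier G UNIV"
  using tilde_H_closed gr_carrier_subset_UNIV by blast

lemma tilde_mult_mem:
  assumes h: "h \<in> H"
  shows "tilde H \<star> h = tilde H"
proof -
  obtain h' where h': "h' \<in> H" "h \<star> h' = gr_one G" "h' \<star> h = gr_one G"
    using inverse_mem[OF h] .
  have "bij_betw (\<lambda>j. j \<star> h) H H"
    using h h' by (intro bij_betwI[where g = "\<lambda>j. j \<star> h'"])
      (auto simp: mult_mem gr_mult_assoc gr_mult_one_right)
  then have "(\<Sum>j\<in>H. j \<star> h) = (\<Sum>j\<in>H. j)"
    by (rule sum.reindex_bij_betw)
  then show ?thesis
    by (simp add: tilde_eq_sum gr_mult_sum_left)
qed

lemma mem_mult_tilde: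
  assumes h: "h \<in> H"
  shows "h \<star> tilde H = tilde H"
proof -
  obtain h' where h': "h' \<in> H" "h \<star> h' = gr_one G" "h' \<star> h = gr_one G"
    using inverse_mem[OF h] .
  have "bij_betw (\<lambda>j. h \<star> j) H H"
    using h h' by (intro bij_betwI[where g = "\<lambda>j. h' \<star> j"])
      (auto simp: mult_mem gr_mult_one_left simp flip: gr_mult_assoc)
  then have "(\<Sum>j\<in>H. h \<star> j) = (\<Sum>j\<in>H. j)"
    by (rule sum.reindex_bij_betw)
  then show ?thesis
    by (simp add: tilde_eq_sum gr_mult_sum_right)
qed

lemma tilde_mult_tilde: "tilde H \<star> tilde H = (\<lambda>k. of_nat (card H) * tilde H k)"
proof -
  have "tilde H \<star> tilde H = (\<Sum>j\<in>H. j \<star> tilde H)"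
    by (subst (1) tilde_eq_sum) (rule gr_mult_sum_left)
  also have "\<dots> = (\<Sum>j\<in>H. tilde H)"
    by (simp add: mem_mult_tilde)
  finally have "tilde H \<star> tilde H = (\<Sum>j\<in>H. tilde H)" .
  then show ?thesis
    by (simp add: fun_eq_iff sum_fun_apply)
qed

definition hat :: "'a \<Rightarrow> 'f" where
  "hat = (\<lambda>k. tilde H k / of_nat (card H))"

lemma card_H_nonzero: "(of_nat (card H) :: 'f) \<noteq> 0"
  using one_mem finite_H by (auto simp: card_eq_0_iff)

lemma hat_mult_mem: "h \<in> H \<Longrightarrow> hat \<star> h = hat"
  using gr_mult_scale_left[of "inverse (of_nat (card H))" "tilde H" h]
  by (simp add: hat_def tilde_mult_mem field_simps)

lemma mem_mult_hat: "h \<in> H \<Longrightarrow> h \<star> hat = hat"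
  using gr_mult_scale_right[of h "inverse (of_nat (card H))" "tilde H"]
  by (simp add: hat_def mem_mult_tilde field_simps)

lemma tilde_mult_hat: "tilde H \<star> hat = tilde H"
  using gr_mult_scale_right[of "tilde H" "inverse (of_nat (card H))" "tilde H"] card_H_nonzero
  by (simp add: hat_def tilde_mult_tilde field_simps)

lemma hat_mult_tilde: "hat \<star> tilde H = tilde H"
  using gr_mult_scale_left[of "inverse (of_nat (card H))" "tilde H" "tilde H"] card_H_nonzero
  by (simp add: hat_def tilde_mult_tilde field_simps)

definition left_nil :: "('a \<Rightarrow> 'f) \<Rightarrow> 'a \<Rightarrow> 'f" where
  "left_nil x = tilde H \<star> x \<star> (gr_one G - hat)"

definition right_nil :: "('a \<Rightarrow> 'f) \<Rightarrow> 'a \<Rightarrow> 'f" where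
  "right_nil x = (gr_one G - hat) \<star> x \<star> tilde H"

lemma left_nil_in_UNIV [simp]: "left_nil x \<in> gr_carrier G UNIV"
  by (simp add: left_nil_def)

lemma right_nil_in_UNIV [simp]: "right_nil x \<in> gr_carrier G UNIV"
  by (simp add: right_nil_def)

lemma one_minus_hat_mult_tilde: "(gr_one G - hat) \<star> tilde H = 0"
  by (simp add: gr_mult_diff_left gr_mult_one_left hat_mult_tilde)

lemma tilde_mult_one_minus_hat: "tilde H \<star> (gr_one G - hat) = 0"
  by (simp add: gr_mult_diff_right gr_mult_one_right tilde_mult_hat)

lemma left_nil_square: "left_nil x \<star> left_nil x = 0"
proof -
  have "left_nil x \<star> left_nil x
      = tilde H \<star> x \<star> ((gr_one G - hat) \<star> tilde H) \<star> x \<star> (gr_one G - hat)"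
    by (simp add: left_nil_def gr_mult_assoc)
  then show ?thesis
    by (simp add: one_minus_hat_mult_tilde)
qed

lemma right_nil_square: "right_nil x \<star> right_nil x = 0"
proof -
  have "right_nil x \<star> right_nil x
      = (gr_one G - hat) \<star> x \<star> (tilde H \<star> (gr_one G - hat)) \<star> x \<star> tilde H"
    by (simp add: right_nil_def gr_mult_assoc)
  then show ?thesis
    by (simp add: tilde_mult_one_minus_hat)
qed

lemma psi_left_conj:
  assumes h: "h \<in> H"
  shows "psi_left G H x h = (gr_one G - left_nil x) \<star> h \<star> (gr_one G + left_nil x)"
proof -
  let ?a = "left_nil x"
  have ha: "h \<star> ?a = ?a"
    using h by (simp add: left_nil_def mem_mult_tilde flip: gr_mult_assoc)
  have ah: "?a - ?a \<star> h = tilde H \<star> x \<star> (gr_one G - h)"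
    using h by (simp add: left_nil_def gr_mult_assoc gr_mult_diff_left gr_mult_diff_right
        gr_mult_one_left gr_mult_one_right hat_mult_mem flip: gr_mult_diff_right)
  have "(gr_one G - ?a) \<star> h \<star> (gr_one G + ?a) = h + (?a - ?a \<star> h)"
    using h by (simp add: gr_mult_diff_left gr_mult_add_right gr_mult_one_left gr_mult_one_right
        gr_mult_assoc ha left_nil_square)
  then show ?thesis
    by (simp add: psi_left_def ah)
qed

lemma psi_right_conj:
  assumes h: "h \<in> H"
  shows "psi_right G x H h = (gr_one G + right_nil x) \<star> h \<star> (gr_one G - right_nil x)"
proof -
  let ?a = "right_nil x"
  have ah: "?a \<star> h = ?a"
    using h by (simp add: right_nil_def gr_mult_assoc tilde_mult_mem)
  have ha: "?a - h \<star> ?a = (gr_one G - h) \<star> x \<star> tilde H"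
    using h by (simp add: right_nil_def gr_mult_diff_left gr_mult_diff_right
        gr_mult_one_left gr_mult_one_right mem_mult_hat flip: gr_mult_assoc)
  have "(gr_one G + ?a) \<star> h \<star> (gr_one G - ?a) = h + (?a - h \<star> ?a)"
    using h by (simp add: gr_mult_add_left gr_mult_diff_right gr_mult_one_left gr_mult_one_right
        gr_mult_assoc ah right_nil_square)
  then show ?thesis
    by (simp add: psi_right_def ha)
qed

context
  fixes u v :: "'a \<Rightarrow> 'f" and \<psi> :: "('a \<Rightarrow> 'f) \<Rightarrow> 'a \<Rightarrow> 'f"
  assumes u: "u \<in> gr_carrier G UNIV" and v: "v \<in> gr_carrier G UNIV"
    and uv: "u \<star> v = gr_one G" and vu: "v \<star> u = gr_one G"
    and conj: "\<And>h. h \<in> H \<Longrightarrow> \<psi> h = v \<star> h \<star> u"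
begin

lemma conj_mult: "h \<in> H \<Longrightarrow> k \<in> H \<Longrightarrow> \<psi> (h \<star> k) = \<psi> h \<star> \<psi> k"
proof -
  assume h: "h \<in> H" and k: "k \<in> H"
  have "\<psi> h \<star> \<psi> k = v \<star> h \<star> (u \<star> v) \<star> k \<star> u"
    using h k by (simp add: conj gr_mult_assoc)
  also have "\<dots> = \<psi> (h \<star> k)"
    using h k by (simp add: conj uv gr_mult_one_right mult_mem gr_mult_assoc)
  finally show ?thesis ..
qed

lemma conj_one: "\<psi> (gr_one G) = gr_one G"
  using one_mem v by (simp add: conj gr_mult_one_right vu)

lemma inj_on_conj: "inj_on \<psi> H"
proof (rule inj_onI)
  fix h k assume h: "h \<in> H" and k: "k \<in> H" and eq: "\<psi> h = \<psi> k"
  have undo: "u \<star> \<psi> j \<star> v = j" if "j \<in> H" for j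
    using that by (simp add: conj gr_mult_assoc uv gr_mult_one_right)
      (simp add: uv gr_mult_one_left flip: gr_mult_assoc)
  show "h = k"
    by (metis undo h k eq)
qed

lemma conj_hom:
  assumes closed: "\<And>h. h \<in> H \<Longrightarrow> \<psi> h \<in> gr_carrier G A"
  shows "\<psi> \<in> hom ((units_of (group_ring G A))\<lparr>carrier := H\<rparr>) (units_of (group_ring G A))"
proof -
  have "\<psi> h \<in> Units (group_ring G A)" if h: "h \<in> H" for h
  proof -
    obtain h' where h': "h' \<in> H" "h \<star> h' = gr_one G" "h' \<star> h = gr_one G"
      using inverse_mem[OF h] .
    then have "\<psi> h \<star> \<psi> h' = gr_one G" "\<psi> h' \<star> \<psi> h = gr_one G"
      using h by (simp_all flip: conj_mult add: conj_one)
    then show ?thesis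
      using closed h h' unfolding Units_def by (auto simp: group_ring_def)
  qed
  then show ?thesis
    by (auto simp: hom_def units_of_carrier units_of_mult group_ring_def conj_mult)
qed

lemma conj_image_eq:
  "\<exists>w\<in>Units (group_ring G UNIV).
     (\<lambda>h. inv\<^bsub>group_ring G UNIV\<^esub> w \<otimes>\<^bsub>group_ring G UNIV\<^esub> h \<otimes>\<^bsub>group_ring G UNIV\<^esub> w) ` H
       = \<psi> ` H"
proof
  have "inv\<^bsub>group_ring G UNIV\<^esub> u = v"
    using monoid.inv_unique'[OF monoid_group_ring[OF ring_closed_UNIV], of u v] u v uv vu
    by (simp add: group_ring_def)
  then show "(\<lambda>h. inv\<^bsub>group_ring G UNIV\<^esub> u \<otimes>\<^bsub>group_ring G UNIV\<^esub> h \<otimes>\<^bsub>group_ring G UNIV\<^esub> u) ` H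
      = \<psi> ` H"
    by (auto simp: group_ring_def conj intro!: image_cong)
  show "u \<in> Units (group_ring G UNIV)"
    using u v uv vu unfolding Units_def by (auto simp: group_ring_def)
qed

end

lemma psi_left_closed:
  "x \<in> gr_carrier G A \<Longrightarrow> h \<in> H \<Longrightarrow> psi_left G H x h \<in> gr_carrier G A"
  unfolding psi_left_def gr_add_eq_plus gr_diff_eq_minus
  by (intro gr_add_closed[OF ring_closed] gr_mult_closed[OF ring_closed] gr_diff_closed[OF ring_closed]
      tilde_H_closed gr_one_closed[OF ring_closed]) (simp_all add: mem_gr_carrier)

lemma psi_right_closed:
  "x \<in> gr_carrier G A \<Longrightarrow> h \<in> H \<Longrightarrow> psi_right G x H h \<in> gr_carrier G A"
  unfolding psi_right_def gr_add_eq_plus gr_diff_eq_minus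
  by (intro gr_add_closed[OF ring_closed] gr_mult_closed[OF ring_closed] gr_diff_closed[OF ring_closed]
      tilde_H_closed gr_one_closed[OF ring_closed]) (simp_all add: mem_gr_carrier)

lemma psi_left_hom:
  "x \<in> gr_carrier G A \<Longrightarrow>
    psi_left G H x \<in> hom ((units_of (group_ring G A))\<lparr>carrier := H\<rparr>) (units_of (group_ring G A))"
  using square_zero_unit[OF left_nil_in_UNIV left_nil_square]
  by (intro conj_hom[OF _ _ _ _ psi_left_conj]) (simp_all add: psi_left_closed)

lemma inj_on_psi_left: "inj_on (psi_left G H x) H"
  using square_zero_unit[OF left_nil_in_UNIV left_nil_square]
  by (intro inj_on_conj[OF _ _ _ _ psi_left_conj]) simp_all

lemma psi_left_image_conj:
  "\<exists>u\<in>Units (group_ring G UNIV).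
     (\<lambda>h. inv\<^bsub>group_ring G UNIV\<^esub> u \<otimes>\<^bsub>group_ring G UNIV\<^esub> h \<otimes>\<^bsub>group_ring G UNIV\<^esub> u) ` H
       = psi_left G H x ` H"
  using square_zero_unit[OF left_nil_in_UNIV left_nil_square]
  by (intro conj_image_eq[OF _ _ _ _ psi_left_conj]) simp_all

lemma psi_right_hom:
  "x \<in> gr_carrier G A \<Longrightarrow>
    psi_right G x H \<in> hom ((units_of (group_ring G A))\<lparr>carrier := H\<rparr>) (units_of (group_ring G A))"
  using square_zero_unit[OF right_nil_in_UNIV right_nil_square]
  by (intro conj_hom[OF _ _ _ _ psi_right_conj]) (simp_all add: psi_right_closed)

lemma inj_on_psi_right: "inj_on (psi_right G x H) H"
  using square_zero_unit[OF right_nil_in_UNIV right_nil_square]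
  by (intro inj_on_conj[OF _ _ _ _ psi_right_conj]) simp_all

lemma psi_right_image_conj:
  "\<exists>u\<in>Units (group_ring G UNIV).
     (\<lambda>h. inv\<^bsub>group_ring G UNIV\<^esub> u \<otimes>\<^bsub>group_ring G UNIV\<^esub> h \<otimes>\<^bsub>group_ring G UNIV\<^esub> u) ` H
       = psi_right G x H ` H"
  using square_zero_unit[OF right_nil_in_UNIV right_nil_square]
  by (intro conj_image_eq[OF _ _ _ _ psi_right_conj]) simp_all

lemma subgroup_gr_of_preimage:
  assumes HG: "H \<subseteq> gr_of G ` carrier G"
  shows "subgroup {a \<in> carrier G. gr_of G a \<in> H} G"
proof (rule subgroupI)
  show "{a \<in> carrier G. gr_of G a \<in> H} \<noteq> {}"
    using one_mem by (auto simp: gr_one_eq_gr_of)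
next
  fix a assume a: "a \<in> {a \<in> carrier G. gr_of G a \<in> H}"
  then obtain h' where h': "h' \<in> H" "h' \<star> gr_of G a = gr_one G"
    using inverse_mem by blast
  then obtain b where b: "b \<in> carrier G" "h' = gr_of G b"
    using HG by blast
  then have "(gr_of G (b \<otimes> a) :: 'a \<Rightarrow> 'f) = gr_of G \<one>"
    using a h' by (simp add: gr_of_mult gr_one_eq_gr_of)
  then have "inv a = b"
    using a b by (intro inv_equality) (auto dest: injD[OF gr_of_inj])
  then show "inv a \<in> {a \<in> carrier G. gr_of G a \<in> H}"
    using b h' by simp
next
  fix a b assume "a \<in> {a \<in> carrier G. gr_of G a \<in> H}" "b \<in> {a \<in> carrier G. gr_of G a \<in> H}"
  then show "a \<otimes> b \<in> {a \<in> carrier G. gr_of G a \<in> H}"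
    using mult_mem by (simp add: flip: gr_of_mult)
qed auto

lemma psi_gr_of_conj_inter:
  assumes HG: "H \<subseteq> gr_of G ` carrier G" and g: "g \<in> carrier G"
  shows "let Hg = (\<lambda>h. gr_of G (inv g) \<otimes>\<^bsub>group_ring G A\<^esub> h \<otimes>\<^bsub>group_ring G A\<^esub> gr_of G g) ` H;
             p1 = psi_left G H (gr_of G g);
             p2 = psi_right G (gr_of G (inv g)) H
         in (\<forall>h\<in>H \<inter> Hg. p1 h = h \<and> p2 h = h) \<and> p1 ` H \<inter> p2 ` H = H \<inter> Hg"
proof -
  define K where "K = {a \<in> carrier G. gr_of G a \<in> H}"
  have K: "subgroup K G"
    unfolding K_def using HG by (rule subgroup_gr_of_preimage)
  have HK: "H = gr_of G ` K"
    unfolding K_def using HG by blast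
  have "H \<inter> (\<lambda>h. gr_of G (inv g) \<star> h \<star> gr_of G g) ` H = gr_of G ` {b \<in> K. g \<otimes> b \<otimes> inv g \<in> K}"
    unfolding HK by (rule gr_of_conj_image_inter[OF K g])
  moreover have "\<forall>h \<in> gr_of G ` {b \<in> K. g \<otimes> b \<otimes> inv g \<in> K}.
      psi_left G H (gr_of G g) h = h \<and> psi_right G (gr_of G (inv g)) H h = h"
    using psi_left_gr_of_fixed[OF K g] psi_right_gr_of_fixed[OF K g] subgroup.subset[OF K]
    unfolding HK by blast
  ultimately show ?thesis
    using psi_gr_of_images_inter[OF K g, where 'f = 'f] by (simp add: Let_def group_ring_def flip: HK)
qed

end

theorem proposition6p2:
  fixes G :: "('g,'b) monoid_scheme" (structure)
    and R :: "'f::field_char_0 set"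
    and H :: "('g \<Rightarrow> 'f) set"
    and x :: "'g \<Rightarrow> 'f"
  assumes nf: "number_field TYPE('f)"
    and ord: "is_order R"
    and grp: "group G" and finG: "finite (carrier G)"
    and finH: "finite H"
    and HV: "H \<subseteq> gr_V G R"
    and Hsub: "subgroup H (units_of (group_ring G R))"
    and x: "x \<in> carrier (group_ring G R)"
  shows
    \<comment> \<open>(i)\<close>
    "(psi_left G H x \<in> hom ((units_of (group_ring G R))\<lparr>carrier := H\<rparr>) (units_of (group_ring G R))
        \<and> inj_on (psi_left G H x) H)
     \<and> (psi_right G x H \<in> hom ((units_of (group_ring G R))\<lparr>carrier := H\<rparr>) (units_of (group_ring G R))
        \<and> inj_on (psi_right G x H) H)
     \<comment> \<open>(ii)\<close>
     \<and> (\<exists>u\<in>Units (group_ring G UNIV).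
          (\<lambda>h. inv\<^bsub>group_ring G UNIV\<^esub> u \<otimes>\<^bsub>group_ring G UNIV\<^esub> h \<otimes>\<^bsub>group_ring G UNIV\<^esub> u) ` H
            = psi_left G H x ` H)
     \<and> (\<exists>u\<in>Units (group_ring G UNIV).
          (\<lambda>h. inv\<^bsub>group_ring G UNIV\<^esub> u \<otimes>\<^bsub>group_ring G UNIV\<^esub> h \<otimes>\<^bsub>group_ring G UNIV\<^esub> u) ` H
            = psi_right G x H ` H)
     \<comment> \<open>(iii)\<close>
     \<and> (H \<subseteq> gr_of G ` carrier G \<longrightarrow>
          (\<forall>g\<in>carrier G.
             (let Hg = (\<lambda>h. gr_of G (inv g) \<otimes>\<^bsub>group_ring G R\<^esub> h \<otimes>\<^bsub>group_ring G R\<^esub> gr_of G g) ` H;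
                  p1 = psi_left G H (gr_of G g);
                  p2 = psi_right G (gr_of G (inv g)) H
              in (\<forall>h\<in>H \<inter> Hg. p1 h = h \<and> p2 h = h)
                 \<and> p1 ` H \<inter> p2 ` H = H \<inter> Hg)))"
proof -
  interpret finite_unit_subgroup G R H
    by (intro finite_unit_subgroup.intro finite_group.intro finite_group_axioms.intro
        finite_unit_subgroup_axioms.intro grp finG is_order_imp_ring_closed[OF ord] Hsub finH)
  have "x \<in> gr_carrier G R"
    using x by (simp add: group_ring_def)
  then show ?thesis
    using psi_left_hom inj_on_psi_left psi_right_hom inj_on_psi_right
      psi_left_image_conj psi_right_image_conj psi_gr_of_conj_inter by blast
qed

end
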